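(* Let $\nu>0$, $b>0$ and let $f:\mathbb{R}\to\mathbb{R}$ be continuously differentiable with: $f(0)=f(a)=f(1)=0$ for some $a\in(0,1)$; $f(x)<0$ for $x\in(0,a)$ and $f(x)>0$ for $x\in(a,1)$; $f'(0)<0$, $f'(a)>0$, $f'(1)<0$; and $\int_0^1 f(v)\,dv\ge 0$. Let $\hat v:\mathbb{R}\to\mathbb{R}$ be a monotone increasing $C^2$ function with $\lim_{x\to-\infty}\hat v(x)=0$, $\lim_{x\to+\infty}\hat v(x)=1$, satisfying $c\hat v_x=\nu\hat v_{xx}+bf(\hat v)$ on $\mathbb{R}$ for some constant $c\in\mathbb{R}$. Then: (i) $\hat v_x^2(x)\le \frac{2b}{\nu}\int_{\hat v(x)}^1 f(v)\,dv$ for all $x\in\mathbb{R}$; in particular $\lim_{x\to+\infty}e^{-\alpha\frac{c}{\nu}x}\hat v_x^2(x)=0$ for all $\alpha\ge 0$. (ii) The function $x\mapsto e^{-2\frac{c}{\nu}x}\hat v_x^2(x)$ is increasing on $\{x\le \hat v^{-1}(a)\}$ and decreasing on $\{x\ge \hat v^{-1}(a)\}$; in particular $\lim_{x\to\pm\infty}e^{-\alpha\frac{c}{\nu}x}\hat v_x^2(x)=0$ for all $\alpha\in[0,2)$.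
   Context: $\hat v$ is a travelling wave of the reaction–diffusion equation $\partial_t v=\nu v_{xx}+bf(v)$ with wave speed $c$; under the assumption $\int_0^1 f\,dv\ge 0$ it is known that $c\ge 0$. *)

theory Defs
  imports "HOL-Analysis.Analysis"
begin

end

theory Submission
  imports Defs
begin

text \<open>With \<open>F\<close> a primitive of \<open>f\<close>, the energy \<open>E = \<nu>/2 v'^2 + b F(v)\<close> satisfies
  \<open>E' = c v'^2\<close>. Since \<open>v\<close> is bounded, \<open>v'\<close> is arbitrarily small at points arbitrarily far out in
  either direction, so \<open>E\<close> comes arbitrarily close to \<open>b F(1)\<close> near \<open>+\<infinity>\<close> and to \<open>b F(0)\<close>
  near \<open>-\<infinity>\<close>. For \<open>c < 0\<close> the nonincreasing \<open>E\<close> would be squeezed between \<open>b F(1) \<ge> b F(0)\<close> and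
  \<open>b F(0)\<close>, hence constant, forcing \<open>v' = 0\<close>. So \<open>c \<ge> 0\<close>, \<open>E\<close> is nondecreasing, and \<open>E \<le> b F(1)\<close>
  is (i). For (ii), \<open>g = exp(-2cx/\<nu>) v'^2\<close> has \<open>g' = -(2b/\<nu>) exp(-2cx/\<nu>) v' f(v)\<close>, whose sign is
  that of \<open>-f(v)\<close>. Near \<open>-\<infinity>\<close> the function \<open>g\<close> is increasing, so \<open>exp(-\<alpha>cx/\<nu>) v'^2 =
  exp((2-\<alpha>)cx/\<nu>) g\<close> tends to \<open>0\<close> if \<open>c > 0\<close>; if \<open>c = 0\<close> then \<open>g = v'^2\<close>, and a monotone function
  that is frequently small tends to \<open>0\<close>.\<close>

lemma mono_imp_deriv_nonneg:
  fixes v :: "real \<Rightarrow> real"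
  assumes "mono v" and "(v has_real_derivative D) (at x)"
  shows "0 \<le> D"
proof (rule ccontr)
  assume "\<not> 0 \<le> D"
  then obtain d where "d > 0" and "\<And>h. 0 < h \<Longrightarrow> h < d \<Longrightarrow> v (x + h) < v x"
    using DERIV_neg_dec_right[OF assms(2)] by force
  then have "v (x + d/2) < v x" by simp
  moreover have "v x \<le> v (x + d/2)" using \<open>mono v\<close> \<open>d > 0\<close> by (simp add: monoD)
  ultimately show False by simp
qed

lemma deriv_less_if_chord_less:
  fixes v v' :: "real \<Rightarrow> real"
  assumes "\<And>t. (v has_real_derivative v' t) (at t)"
    and "x < y" and "v y - v x < (y - x) * d"
  shows "\<exists>z\<in>{x<..<y}. v' z < d"
proof -
  obtain z where "x < z" "z < y" "v y - v x = (y - x) * v' z"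
    using MVT2[of x y v v'] assms(1,2) by auto
  moreover have "v' z < d"
  proof (rule ccontr)
    assume "\<not> v' z < d"
    then have "(y - x) * d \<le> (y - x) * v' z"
      using \<open>x < y\<close> by (intro mult_left_mono) auto
    then show False using assms(3) \<open>v y - v x = (y - x) * v' z\<close> by linarith
  qed
  ultimately show ?thesis by auto
qed

lemma frequently_deriv_less_at_top:
  fixes v v' :: "real \<Rightarrow> real"
  assumes deriv: "\<And>t. (v has_real_derivative v' t) (at t)"
    and bounds: "\<And>t. lo \<le> v t \<and> v t \<le> hi" and "d > 0"
  shows "\<exists>\<^sub>F t in at_top. v' t < d"
  unfolding frequently_def eventually_at_top_linorder
proof clarify
  fix N assume none: "\<forall>t\<ge>N. \<not> v' t < d"
  define L where "L = (hi - lo + 1) / d"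
  have "lo \<le> hi" using bounds[of N] by linarith
  then have "L > 0" and Ld: "L * d = hi - lo + 1"
    using \<open>d > 0\<close> by (simp_all add: L_def)
  have "v (N + L) - v N < (N + L - N) * d"
    using bounds[of N] bounds[of "N + L"] Ld by simp
  then obtain z where "N < z" "v' z < d"
    using deriv_less_if_chord_less[OF deriv, of N "N + L" d] \<open>L > 0\<close> by auto
  then show False using none by simp
qed

lemma frequently_deriv_less_at_bot:
  fixes v v' :: "real \<Rightarrow> real"
  assumes deriv: "\<And>t. (v has_real_derivative v' t) (at t)"
    and bounds: "\<And>t. lo \<le> v t \<and> v t \<le> hi" and "d > 0"
  shows "\<exists>\<^sub>F t in at_bot. v' t < d"
  unfolding frequently_def eventually_at_bot_linorder
proof clarify
  fix N assume none: "\<forall>t\<le>N. \<not> v' t < d"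
  define L where "L = (hi - lo + 1) / d"
  have "lo \<le> hi" using bounds[of N] by linarith
  then have "L > 0" and Ld: "L * d = hi - lo + 1"
    using \<open>d > 0\<close> by (simp_all add: L_def)
  have "v N - v (N - L) < (N - (N - L)) * d"
    using bounds[of N] bounds[of "N - L"] Ld by simp
  then obtain z where "z < N" "v' z < d"
    using deriv_less_if_chord_less[OF deriv, of "N - L" N d] \<open>L > 0\<close> by auto
  then show False using none by simp
qed

lemma le_if_frequently_near:
  fixes E :: "'a \<Rightarrow> real"
  assumes "\<forall>\<^sub>F y in F. E x \<le> E y" and "\<And>e. e > 0 \<Longrightarrow> \<exists>\<^sub>F y in F. \<bar>E y - l\<bar> < e"
  shows "E x \<le> l"
proof (rule field_le_epsilon)
  fix e :: real assume "e > 0"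
  then obtain y where "\<bar>E y - l\<bar> < e" "E x \<le> E y"
    using frequently_eventually_frequently[OF assms(2) assms(1)] by (auto elim: frequentlyE)
  then show "E x \<le> l + e" by linarith
qed

lemma ge_if_frequently_near:
  fixes E :: "'a \<Rightarrow> real"
  assumes "\<forall>\<^sub>F y in F. E y \<le> E x" and "\<And>e. e > 0 \<Longrightarrow> \<exists>\<^sub>F y in F. \<bar>E y - l\<bar> < e"
  shows "l \<le> E x"
  using le_if_frequently_near[of "\<lambda>y. - E y" x F "- l"] assms by (simp add: abs_minus_commute)

lemma frequently_near_scaled_sq_add:
  fixes w h :: "'a \<Rightarrow> real"
  assumes small: "\<And>d. d > 0 \<Longrightarrow> \<exists>\<^sub>F y in F. \<bar>w y\<bar> < d"
    and lim: "(h \<longlongrightarrow> l) F" and "e > 0"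
  shows "\<exists>\<^sub>F y in F. \<bar>k * (w y)\<^sup>2 + h y - l\<bar> < e"
proof -
  define d where "d = min 1 (e / (2 * (\<bar>k\<bar> + 1)))"
  have "d > 0" using \<open>e > 0\<close> by (simp add: d_def)
  have kin: "\<bar>k * (w y)\<^sup>2\<bar> < e / 2" if "\<bar>w y\<bar> < d" for y
  proof -
    have "\<bar>w y\<bar> \<le> 1" using that by (simp add: d_def)
    then have "(w y)\<^sup>2 \<le> \<bar>w y\<bar>"
      by (metis abs_ge_zero abs_mult_self_eq mult_left_le_one_le power2_eq_square)
    also have "\<dots> \<le> e / (2 * (\<bar>k\<bar> + 1))" using that by (simp add: d_def)
    finally have "\<bar>k\<bar> * (w y)\<^sup>2 \<le> \<bar>k\<bar> * (e / (2 * (\<bar>k\<bar> + 1)))"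
      by (rule mult_left_mono) simp
    also have "\<dots> = e / 2 * (\<bar>k\<bar> / (\<bar>k\<bar> + 1))"
      by simp
    also have "\<dots> < e / 2 * 1"
      using \<open>e > 0\<close> by (intro mult_strict_left_mono) simp_all
    finally show ?thesis by (simp add: abs_mult)
  qed
  have "\<forall>\<^sub>F y in F. \<bar>h y - l\<bar> < e / 2"
    using tendstoD[OF lim, of "e / 2"] \<open>e > 0\<close> by (simp add: dist_real_def)
  with small[OF \<open>d > 0\<close>] show ?thesis
  proof (rule frequently_eventually_frequently[THEN frequently_elim1])
    fix y assume "\<bar>w y\<bar> < d \<and> \<bar>h y - l\<bar> < e / 2"
    then show "\<bar>k * (w y)\<^sup>2 + h y - l\<bar> < e" using kin[of y] by linarith
  qed
qed

lemma tendsto_zero_at_bot_if_mono_on_frequently_small: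
  fixes g :: "real \<Rightarrow> real"
  assumes "mono_on {..p} g" and "\<And>x. 0 \<le> g x"
    and small: "\<And>e. e > 0 \<Longrightarrow> \<exists>\<^sub>F x in at_bot. g x < e"
  shows "(g \<longlongrightarrow> 0) at_bot"
proof (rule order_tendstoI)
  fix e :: real assume "e > 0"
  then obtain y where "y \<le> p" "g y < e"
    using frequently_eventually_frequently[OF small eventually_le_at_bot[of p]] by (auto elim: frequentlyE)
  then have "g x < e" if "x \<le> y" for x
    using that monotone_onD[OF assms(1)] by (meson atMost_iff order.trans order.strict_trans1)
  then show "\<forall>\<^sub>F x in at_bot. g x < e"
    by (auto simp: eventually_at_bot_linorder)
next
  fix e :: real assume "e < 0"
  then show "\<forall>\<^sub>F x in at_bot. e < g x"
    using assms(2) by (simp add: order.strict_trans2)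
qed

locale travelling_wave =
  fixes \<nu> b c :: real and f v v' v'' :: "real \<Rightarrow> real"
  assumes nu_pos: "\<nu> > 0" and b_pos: "b > 0"
    and f_cont: "continuous_on UNIV f"
    and v_mono: "mono v"
    and v_deriv: "\<And>x. (v has_real_derivative v' x) (at x)"
    and v'_deriv: "\<And>x. (v' has_real_derivative v'' x) (at x)"
    and v_lim_bot: "(v \<longlongrightarrow> 0) at_bot"
    and v_lim_top: "(v \<longlongrightarrow> 1) at_top"
    and ode: "\<And>x. c * v' x = \<nu> * v'' x + b * f (v x)"
begin

lemma v_le_one: "v x \<le> 1"
proof (rule tendsto_lowerbound[OF v_lim_top])
  show "\<forall>\<^sub>F y in at_top. v x \<le> v y"
    using eventually_ge_at_top[of x] by eventually_elim (use v_mono in \<open>simp add: monoD\<close>)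
qed simp

lemma v_nonneg: "0 \<le> v x"
proof (rule tendsto_upperbound[OF v_lim_bot])
  show "\<forall>\<^sub>F y in at_bot. v y \<le> v x"
    using eventually_le_at_bot[of x] by eventually_elim (use v_mono in \<open>simp add: monoD\<close>)
qed simp

lemma v'_nonneg: "0 \<le> v' x"
  using mono_imp_deriv_nonneg[OF v_mono v_deriv] .

lemma v'_not_identically_zero: "\<exists>x. v' x \<noteq> 0"
proof (rule ccontr)
  assume "\<not> ?thesis"
  then have "DERIV v x :> 0" for x
    using v_deriv[of x] by simp
  then have "v = (\<lambda>_. v 0)"
    by (blast intro: DERIV_isconst_all)
  then show False
    using v_lim_bot v_lim_top by (metis tendsto_const_iff trivial_limit_at_bot_linorder trivial_limit_at_top_linorder zero_neq_one)
qed

lemma frequently_small_v'_at_top: "d > 0 \<Longrightarrow> \<exists>\<^sub>F x in at_top. \<bar>v' x\<bar> < d"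
  using frequently_deriv_less_at_top[OF v_deriv, of 0 1 d] v_nonneg v_le_one v'_nonneg by simp

lemma frequently_small_v'_at_bot: "d > 0 \<Longrightarrow> \<exists>\<^sub>F x in at_bot. \<bar>v' x\<bar> < d"
  using frequently_deriv_less_at_bot[OF v_deriv, of 0 1 d] v_nonneg v_le_one v'_nonneg by simp

text \<open>The base point \<open>-1\<close> only has to lie below the range \<open>[0, 1]\<close> of \<open>v\<close>,
  so that \<open>F\<close> is differentiable on a neighbourhood of it.\<close>
definition F :: "real \<Rightarrow> real" where "F u = integral {-1..u} f"

lemma F_deriv: "u > -1 \<Longrightarrow> (F has_real_derivative f u) (at u)"
proof -
  assume "u > -1"
  have "(F has_real_derivative f u) (at u within {-1..u+1})"
    unfolding F_def[abs_def] using \<open>u > -1\<close>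
    by (intro integral_has_real_derivative continuous_on_subset[OF f_cont]) auto
  moreover have "at u within {-1..u+1} = at u"
    using \<open>u > -1\<close> by (intro at_within_interior) auto
  ultimately show ?thesis by simp
qed

lemma integral_eq_F_diff: "-1 \<le> u \<Longrightarrow> u \<le> 1 \<Longrightarrow> integral {u..1} f = F 1 - F u"
proof -
  assume "-1 \<le> u" "u \<le> 1"
  have "f integrable_on {-1..1}"
    by (intro integrable_continuous_real continuous_on_subset[OF f_cont]) simp
  then have "integral {-1..u} f + integral {u..1} f = integral {-1..1} f"
    using \<open>-1 \<le> u\<close> \<open>u \<le> 1\<close> by (rule Henstock_Kurzweil_Integration.integral_combine[rotated 2])
  then show ?thesis unfolding F_def by simp
qed

lemma F_comp_v_tendsto_at_top: "((\<lambda>x. F (v x)) \<longlongrightarrow> F 1) at_top"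
  by (intro isCont_tendsto_compose[OF _ v_lim_top] DERIV_isCont[OF F_deriv]) simp

lemma F_comp_v_tendsto_at_bot: "((\<lambda>x. F (v x)) \<longlongrightarrow> F 0) at_bot"
  by (intro isCont_tendsto_compose[OF _ v_lim_bot] DERIV_isCont[OF F_deriv]) simp

definition energy :: "real \<Rightarrow> real" where
  "energy x = \<nu>/2 * (v' x)\<^sup>2 + b * F (v x)"

lemma energy_deriv: "(energy has_real_derivative c * (v' x)\<^sup>2) (at x)"
proof -
  have "((\<lambda>x. F (v x)) has_real_derivative f (v x) * v' x) (at x)"
    by (rule DERIV_chain2[OF F_deriv v_deriv]) (use v_nonneg[of x] in simp)
  then have "(energy has_real_derivative \<nu>/2 * (2 * v' x * v'' x) + b * (f (v x) * v' x)) (at x)"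
    unfolding energy_def[abs_def] by (auto intro!: derivative_eq_intros v'_deriv)
  also have "\<nu>/2 * (2 * v' x * v'' x) + b * (f (v x) * v' x) = v' x * (\<nu> * v'' x + b * f (v x))"
    by (simp add: algebra_simps)
  also have "\<dots> = c * (v' x)\<^sup>2"
    unfolding ode[of x, symmetric] by (simp add: power2_eq_square)
  finally show ?thesis .
qed

lemma energy_frequently_near_at_top: "e > 0 \<Longrightarrow> \<exists>\<^sub>F x in at_top. \<bar>energy x - b * F 1\<bar> < e"
  unfolding energy_def
  by (rule frequently_near_scaled_sq_add[OF frequently_small_v'_at_top tendsto_mult_left[OF F_comp_v_tendsto_at_top]])

lemma energy_frequently_near_at_bot: "e > 0 \<Longrightarrow> \<exists>\<^sub>F x in at_bot. \<bar>energy x - b * F 0\<bar> < e"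
  unfolding energy_def
  by (rule frequently_near_scaled_sq_add[OF frequently_small_v'_at_bot tendsto_mult_left[OF F_comp_v_tendsto_at_bot]])

lemma energy_mono: "c \<ge> 0 \<Longrightarrow> x \<le> y \<Longrightarrow> energy x \<le> energy y"
  by (rule DERIV_nonneg_imp_nondecreasing) (auto intro!: exI energy_deriv)

lemma energy_antimono: "c \<le> 0 \<Longrightarrow> x \<le> y \<Longrightarrow> energy y \<le> energy x"
  by (rule DERIV_nonpos_imp_nonincreasing) (auto intro!: exI energy_deriv mult_nonpos_nonneg)

lemma speed_nonneg:
  assumes "integral {0..1} f \<ge> 0"
  shows "c \<ge> 0"
proof (rule ccontr)
  assume "\<not> c \<ge> 0"
  then have "c \<le> 0" by simp
  have lower: "b * F 1 \<le> energy x" for x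
    using eventually_mono[OF eventually_ge_at_top energy_antimono[OF \<open>c \<le> 0\<close>, of x]]
    by (rule ge_if_frequently_near[OF _ energy_frequently_near_at_top])
  have upper: "energy x \<le> b * F 0" for x
    using eventually_mono[OF eventually_le_at_bot energy_antimono[OF \<open>c \<le> 0\<close>, of _ x]]
    by (rule le_if_frequently_near[OF _ energy_frequently_near_at_bot])
  have "b * F 0 \<le> b * F 1"
    using integral_eq_F_diff[of 0] assms b_pos by simp
  with lower upper have "energy = (\<lambda>_. b * F 0)"
    by (intro ext order.antisym) (auto intro: order.trans)
  then have "c * (v' x)\<^sup>2 = 0" for x
    using energy_deriv[of x] DERIV_const DERIV_unique by metis
  then show False
    using v'_not_identically_zero \<open>\<not> c \<ge> 0\<close> by simp
qed

lemma energy_le: "c \<ge> 0 \<Longrightarrow> energy x \<le> b * F 1"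
  using eventually_mono[OF eventually_ge_at_top energy_mono[of x]]
  by (rule le_if_frequently_near[OF _ energy_frequently_near_at_top])

lemma v'_sq_le: "c \<ge> 0 \<Longrightarrow> (v' x)\<^sup>2 \<le> 2 * b / \<nu> * integral {v x..1} f"
  using energy_le[of x] nu_pos v_nonneg[of x] v_le_one[of x]
  by (simp add: energy_def integral_eq_F_diff field_simps)

lemma v'_sq_tendsto_at_top:
  assumes "c \<ge> 0"
  shows "((\<lambda>x. (v' x)\<^sup>2) \<longlongrightarrow> 0) at_top"
proof (rule tendsto_sandwich[of "\<lambda>_. 0" _ _ "\<lambda>x. 2 * b / \<nu> * (F 1 - F (v x))"])
  have "(v' x)\<^sup>2 \<le> 2 * b / \<nu> * (F 1 - F (v x))" for x
    using v'_sq_le[OF assms, of x] v_nonneg[of x] v_le_one[of x] by (simp add: integral_eq_F_diff)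
  then show "\<forall>\<^sub>F x in at_top. (v' x)\<^sup>2 \<le> 2 * b / \<nu> * (F 1 - F (v x))"
    by (intro always_eventually allI)
  show "((\<lambda>x. 2 * b / \<nu> * (F 1 - F (v x))) \<longlongrightarrow> 0) at_top"
    using tendsto_mult_left[OF tendsto_diff[OF tendsto_const F_comp_v_tendsto_at_top], of "2 * b / \<nu>" "F 1"]
    by simp
qed auto

lemma exp_scaled_v'_sq_tendsto_at_top:
  assumes "c \<ge> 0" "\<alpha> \<ge> 0"
  shows "((\<lambda>x. exp (- \<alpha> * (c / \<nu>) * x) * (v' x)\<^sup>2) \<longlongrightarrow> 0) at_top"
proof (rule tendsto_sandwich[OF _ _ tendsto_const v'_sq_tendsto_at_top[OF \<open>c \<ge> 0\<close>]])
  show "\<forall>\<^sub>F x in at_top. exp (- \<alpha> * (c / \<nu>) * x) * (v' x)\<^sup>2 \<le> (v' x)\<^sup>2"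
    using eventually_ge_at_top[of 0]
  proof eventually_elim
    case (elim x)
    then have "exp (- \<alpha> * (c / \<nu>) * x) \<le> 1"
      using assms nu_pos by simp
    then show ?case by (simp add: mult_left_le_one_le)
  qed
qed simp

definition weighted_v'_sq :: "real \<Rightarrow> real" where
  "weighted_v'_sq x = exp (- 2 * (c / \<nu>) * x) * (v' x)\<^sup>2"

lemma weighted_v'_sq_deriv:
  "(weighted_v'_sq has_real_derivative 2 * b / \<nu> * exp (- 2 * (c / \<nu>) * x) * v' x * (- f (v x))) (at x)"
proof -
  have "(weighted_v'_sq has_real_derivative
      exp (- 2 * (c / \<nu>) * x) * (- 2 * (c / \<nu>)) * (v' x)\<^sup>2
      + exp (- 2 * (c / \<nu>) * x) * (2 * v' x * v'' x)) (at x)"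
    unfolding weighted_v'_sq_def[abs_def] using nu_pos by (auto intro!: derivative_eq_intros v'_deriv)
  also have "exp (- 2 * (c / \<nu>) * x) * (- 2 * (c / \<nu>)) * (v' x)\<^sup>2
      + exp (- 2 * (c / \<nu>) * x) * (2 * v' x * v'' x)
    = 2 / \<nu> * exp (- 2 * (c / \<nu>) * x) * v' x * (\<nu> * v'' x - c * v' x)"
    using nu_pos by (simp add: field_simps power2_eq_square)
  also have "\<dots> = 2 * b / \<nu> * exp (- 2 * (c / \<nu>) * x) * v' x * (- f (v x))"
    using nu_pos unfolding ode by simp
  finally show ?thesis .
qed

lemma weighted_v'_sq_mono_on:
  assumes "\<And>u. 0 \<le> u \<Longrightarrow> u \<le> v p \<Longrightarrow> f u \<le> 0"
  shows "mono_on {..p} weighted_v'_sq"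
proof (rule mono_onI)
  fix r s assume "s \<in> {..p}" "r \<le> s"
  show "weighted_v'_sq r \<le> weighted_v'_sq s"
  proof (rule DERIV_nonneg_imp_nondecreasing[OF \<open>r \<le> s\<close>])
    fix t assume "t \<le> s"
    then have "f (v t) \<le> 0"
      using assms v_nonneg v_mono \<open>s \<in> {..p}\<close> by (simp add: monoD)
    then have "0 \<le> 2 * b / \<nu> * exp (- 2 * (c / \<nu>) * t) * v' t * (- f (v t))"
      using b_pos nu_pos v'_nonneg[of t] by (intro mult_nonneg_nonneg) auto
    then show "\<exists>D. DERIV weighted_v'_sq t :> D \<and> 0 \<le> D"
      using weighted_v'_sq_deriv by blast
  qed
qed

lemma weighted_v'_sq_antimono_on:
  assumes "\<And>u. v p \<le> u \<Longrightarrow> u \<le> 1 \<Longrightarrow> 0 \<le> f u"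
  shows "antimono_on {p..} weighted_v'_sq"
proof (rule monotone_onI)
  fix r s assume "r \<in> {p..}" "r \<le> s"
  show "weighted_v'_sq s \<le> weighted_v'_sq r"
  proof (rule DERIV_nonpos_imp_nonincreasing[OF \<open>r \<le> s\<close>])
    fix t assume "r \<le> t"
    then have "0 \<le> f (v t)"
      using assms v_le_one v_mono \<open>r \<in> {p..}\<close> by (simp add: monoD)
    then have "2 * b / \<nu> * exp (- 2 * (c / \<nu>) * t) * v' t * (- f (v t)) \<le> 0"
      using b_pos nu_pos v'_nonneg[of t] by (intro mult_nonneg_nonpos mult_nonneg_nonneg) auto
    then show "\<exists>D. DERIV weighted_v'_sq t :> D \<and> D \<le> 0"
      using weighted_v'_sq_deriv by blast
  qed
qed

lemma exp_scaled_v'_sq_tendsto_at_bot: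
  assumes "c \<ge> 0" "0 \<le> \<alpha>" "\<alpha> < 2" "0 < a"
    and f_nonpos: "\<And>u. 0 \<le> u \<Longrightarrow> u \<le> a \<Longrightarrow> f u \<le> 0"
  shows "((\<lambda>x. exp (- \<alpha> * (c / \<nu>) * x) * (v' x)\<^sup>2) \<longlongrightarrow> 0) at_bot"
proof -
  have "\<forall>\<^sub>F x in at_bot. v x < a"
    using order_tendstoD(2)[OF v_lim_bot \<open>0 < a\<close>] .
  then obtain p where "v p < a"
    by (auto simp: eventually_at_bot_linorder)
  have mono: "mono_on {..p} weighted_v'_sq"
    by (rule weighted_v'_sq_mono_on, rule f_nonpos) (use \<open>v p < a\<close> in auto)
  show ?thesis
  proof (cases "c = 0")
    case True
    have w: "weighted_v'_sq = (\<lambda>x. (v' x)\<^sup>2)"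
      unfolding weighted_v'_sq_def using True by simp
    have "\<exists>\<^sub>F x in at_bot. (v' x)\<^sup>2 < e" if "e > 0" for e
      using frequently_near_scaled_sq_add[OF frequently_small_v'_at_bot tendsto_const that, of 1] by simp
    then have "(weighted_v'_sq \<longlongrightarrow> 0) at_bot"
      by (intro tendsto_zero_at_bot_if_mono_on_frequently_small[OF mono]) (simp_all add: w)
    then show ?thesis
      unfolding w using True by simp
  next
    case False
    define k where "k = (2 - \<alpha>) * (c / \<nu>)"
    have "k > 0"
      using assms False nu_pos by (simp add: k_def)
    have factor: "exp (- \<alpha> * (c / \<nu>) * x) * (v' x)\<^sup>2 = exp (k * x) * weighted_v'_sq x" for x
    proof -
      have "exp (k * x) * exp (- 2 * (c / \<nu>) * x) = exp (- \<alpha> * (c / \<nu>) * x)"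
        unfolding k_def mult_exp_exp by (simp add: algebra_simps)
      then show ?thesis
        unfolding weighted_v'_sq_def by (metis mult.assoc)
    qed
    show ?thesis
      unfolding factor
    proof (rule tendsto_sandwich[of "\<lambda>_. 0" _ _ "\<lambda>x. exp (k * x) * weighted_v'_sq p"])
      show "\<forall>\<^sub>F x in at_bot. 0 \<le> exp (k * x) * weighted_v'_sq x"
        by (simp add: weighted_v'_sq_def)
      show "\<forall>\<^sub>F x in at_bot. exp (k * x) * weighted_v'_sq x \<le> exp (k * x) * weighted_v'_sq p"
        using eventually_le_at_bot[of p]
      proof eventually_elim
        case (elim x)
        then have "weighted_v'_sq x \<le> weighted_v'_sq p"
          using mono by (simp add: mono_onD)
        then show ?case by simp
      qed
      have "((\<lambda>x. exp (k * x)) \<longlongrightarrow> 0) at_bot"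
        by (rule filterlim_compose[OF exp_at_bot filterlim_tendsto_pos_mult_at_bot[OF tendsto_const \<open>k > 0\<close> filterlim_ident]])
      then show "((\<lambda>x. exp (k * x) * weighted_v'_sq p) \<longlongrightarrow> 0) at_bot"
        by (rule tendsto_mult_left_zero)
    qed simp
  qed
qed

end

theorem lemma1p1:
  fixes \<nu> b a c :: real
    and f f' v v' v'' :: "real \<Rightarrow> real"
  assumes nu_pos: "\<nu> > 0" and b_pos: "b > 0"
    and f_deriv: "\<And>x. (f has_real_derivative f' x) (at x)"
    and f'_cont: "continuous_on UNIV f'"
    and a_in: "0 < a" "a < 1"
    and f_zeros: "f 0 = 0" "f a = 0" "f 1 = 0"
    and f_neg: "\<And>x. 0 < x \<Longrightarrow> x < a \<Longrightarrow> f x < 0"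
    and f_pos: "\<And>x. a < x \<Longrightarrow> x < 1 \<Longrightarrow> f x > 0"
    and f'_signs: "f' 0 < 0" "f' a > 0" "f' 1 < 0"
    and f_int: "integral {0..1} f \<ge> 0"
    and v_mono: "mono v"
    and v_deriv: "\<And>x. (v has_real_derivative v' x) (at x)"
    and v'_deriv: "\<And>x. (v' has_real_derivative v'' x) (at x)"
    and v''_cont: "continuous_on UNIV v''"
    and v_lim_bot: "(v \<longlongrightarrow> 0) at_bot"
    and v_lim_top: "(v \<longlongrightarrow> 1) at_top"
    and ode: "\<And>x. c * v' x = \<nu> * v'' x + b * f (v x)"
  shows
    "(\<forall>x. (v' x)\<^sup>2 \<le> 2 * b / \<nu> * integral {v x..1} f)
   \<and> (\<forall>\<alpha>\<ge>0. ((\<lambda>x. exp (- \<alpha> * (c / \<nu>) * x) * (v' x)\<^sup>2) \<longlongrightarrow> 0) at_top)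
   \<and> (\<forall>x0. v x0 = a \<longrightarrow>
          mono_on {..x0} (\<lambda>x. exp (- 2 * (c / \<nu>) * x) * (v' x)\<^sup>2)
        \<and> antimono_on {x0..} (\<lambda>x. exp (- 2 * (c / \<nu>) * x) * (v' x)\<^sup>2))
   \<and> (\<forall>\<alpha>. 0 \<le> \<alpha> \<and> \<alpha> < 2 \<longrightarrow>
          ((\<lambda>x. exp (- \<alpha> * (c / \<nu>) * x) * (v' x)\<^sup>2) \<longlongrightarrow> 0) at_top
        \<and> ((\<lambda>x. exp (- \<alpha> * (c / \<nu>) * x) * (v' x)\<^sup>2) \<longlongrightarrow> 0) at_bot)"
proof -
  interpret travelling_wave \<nu> b c f v v' v''
  proof
    show "continuous_on UNIV f"
      using f_deriv by (meson DERIV_isCont continuous_at_imp_continuous_on)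
  qed (use assms in auto)
  have "c \<ge> 0"
    by (rule speed_nonneg[OF f_int])
  have f_nonpos: "f u \<le> 0" if "0 \<le> u" "u \<le> a" for u
    using f_neg[of u] f_zeros that by (cases "u = 0 \<or> u = a") auto
  have f_nonneg: "0 \<le> f u" if "a \<le> u" "u \<le> 1" for u
    using f_pos[of u] f_zeros that by (cases "u = a \<or> u = 1") auto
  show ?thesis
    using v'_sq_le exp_scaled_v'_sq_tendsto_at_top exp_scaled_v'_sq_tendsto_at_bot[OF _ _ _ a_in(1) f_nonpos]
      weighted_v'_sq_mono_on[OF f_nonpos] weighted_v'_sq_antimono_on[OF f_nonneg]
      \<open>c \<ge> 0\<close> unfolding weighted_v'_sq_def by auto
qed

end
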